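(* Let $N\ge2$, $\beta>0$, real $\Delta_1,\dots,\Delta_4\in(0,2\pi)$ with $\sum_{I=1}^4\Delta_I=2\pi$, and integers $n_1,\dots,n_N,\tilde n_1,\dots,\tilde n_N$. Put $\bar n=\frac1N\sum_jn_j$, $\bar{\tilde n}=\frac1N\sum_j\tilde n_j$, $C=\Delta_3\Delta_4-\Delta_1\Delta_2$ and $$u_j=-\frac{i\beta}{N}(n_j-\bar n),\quad \tilde u_j=\frac{i\beta}{N}(\tilde n_j-\bar{\tilde n}),\quad v=\frac{iN}{\beta}C+2\pi\bar n,\quad \tilde v=-\frac{iN}{\beta}C-2\pi\bar{\tilde n}.$$ Define $E_{ij}=\sum_{a=1,2}F'(u_i-\tilde u_j+\Delta_a)-\sum_{b=3,4}F'(\tilde u_j-u_i+\Delta_b)$. Then $\sum_iu_i=\sum_i\tilde u_i=0$ and for all $i,j\in\{1,\dots,N\}$ $$0=-2\pi i n_i+iv+\frac1\beta\sum_{k=1}^NE_{ik},\qquad 0=-2\pi i\tilde n_j-i\tilde v+\frac1\beta\sum_{k=1}^NE_{kj}.$$ Moreover the function $$\mathcal V=2\pi\sum_{i=1}^N(n_iu_i-\tilde n_i\tilde u_i)-\sum_{i=1}^N(v\,u_i+\tilde v\,\tilde u_i)+\frac i\beta\sum_{i,j=1}^N\Big[\sum_{a=1,2}F(u_i-\tilde u_j+\Delta_a)+\sum_{b=3,4}F(\tilde u_j-u_i+\Delta_b)\Big]$$ evaluated at this configuration equals $\frac{iN^2}{\beta}\sum_{I=1}^4F(\Delta_I)+O(\beta)=\frac{iN^2}{2\beta}\sum_{a<b<c}\Delta_a\Delta_b\Delta_c+O(\beta)$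 as $\beta\to0^+$ with the integers fixed.
   Context: For complex $w$: $F(w)=\frac{w^3}{6}-\frac12\pi w^2\,\mathrm{sign}(\mathrm{Re}\,w)+\frac{\pi^2}{3}w$ and $F'(w)=\frac{w^2}{2}-\pi w\,\mathrm{sign}(\mathrm{Re}\,w)+\frac{\pi^2}{3}$. The sum $\sum_{a<b<c}$ runs over triples in $\{1,2,3,4\}$. The displayed equations are the high-temperature limit (torus modulus $\tau=i\beta/2\pi$) of the Bethe ansatz equations for the topologically twisted index of the Klebanov–Witten $\mathrm{SU}(N)\times\mathrm{SU}(N)$ conifold theory on $S^2\times T^2$, with bi-fundamentals $A_{1,2}$ (chemical potentials $\Delta_{1,2}$) and $B_{1,2}$ (chemical potentials $\Delta_{3,4}$), holonomies $u_i,\tilde u_j$ of the two gauge groups, Lagrange multipliers $v,\tilde v$ for the two $\mathrm{SU}(N)$ constraints, and $\mathcal V$ the Bethe potential. *)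

theory Defs
  imports Complex_Main "HOL-Library.Landau_Symbols"
begin

definition F :: "complex \<Rightarrow> complex" where
  "F (w::complex) = w^3 / 6 - (1/2) * complex_of_real pi * w^2 * complex_of_real (sgn (Re w)) + complex_of_real (pi^2 / 3) * w"

definition F' :: "complex \<Rightarrow> complex" where
  "F' (w::complex) = w^2 / 2 - complex_of_real pi * w * complex_of_real (sgn (Re w)) + complex_of_real (pi^2 / 3)"

definition avg :: "nat \<Rightarrow> (nat \<Rightarrow> int) \<Rightarrow> real" where
  "avg N n = (\<Sum>j=1..N. real_of_int (n j)) / real N"

definition Cc :: "(nat \<Rightarrow> real) \<Rightarrow> real" where
  "Cc \<Delta> = \<Delta> 3 * \<Delta> 4 - \<Delta> 1 * \<Delta> 2"

definition u_sol :: "nat \<Rightarrow> real \<Rightarrow> (nat \<Rightarrow> int) \<Rightarrow> nat \<Rightarrow> complex" where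
  "u_sol N \<beta> n j = - (\<i> * \<beta> / N) * (of_int (n j) - avg N n)"

definition ut_sol :: "nat \<Rightarrow> real \<Rightarrow> (nat \<Rightarrow> int) \<Rightarrow> nat \<Rightarrow> complex" where
  "ut_sol N \<beta> nt j = (\<i> * \<beta> / N) * (of_int (nt j) - avg N nt)"

definition v_sol :: "nat \<Rightarrow> real \<Rightarrow> (nat \<Rightarrow> real) \<Rightarrow> (nat \<Rightarrow> int) \<Rightarrow> complex" where
  "v_sol N \<beta> \<Delta> n = \<i> * N / \<beta> * Cc \<Delta> + 2 * pi * avg N n"

definition vt_sol :: "nat \<Rightarrow> real \<Rightarrow> (nat \<Rightarrow> real) \<Rightarrow> (nat \<Rightarrow> int) \<Rightarrow> complex" where
  "vt_sol N \<beta> \<Delta> nt = - \<i> * N / \<beta> * Cc \<Delta> - 2 * pi * avg N nt"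

definition E :: "(nat \<Rightarrow> real) \<Rightarrow> (nat \<Rightarrow> complex) \<Rightarrow> (nat \<Rightarrow> complex) \<Rightarrow> nat \<Rightarrow> nat \<Rightarrow> complex" where
  "E \<Delta> (u::nat\<Rightarrow>complex) (ut::nat\<Rightarrow>complex) i j = (\<Sum>a\<in>{1,2}. F' (u i - ut j + \<Delta> a)) - (\<Sum>b\<in>{3,4}. F' (ut j - u i + \<Delta> b))"

definition Bethe_V :: "nat \<Rightarrow> real \<Rightarrow> (nat \<Rightarrow> real) \<Rightarrow> (nat \<Rightarrow> int) \<Rightarrow> (nat \<Rightarrow> int)
    \<Rightarrow> (nat \<Rightarrow> complex) \<Rightarrow> (nat \<Rightarrow> complex) \<Rightarrow> complex \<Rightarrow> complex \<Rightarrow> complex" where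
  "Bethe_V N \<beta> \<Delta> n nt (u::nat\<Rightarrow>complex) (ut::nat\<Rightarrow>complex) (v::complex) (vt::complex) =
     2 * complex_of_real pi * (\<Sum>i=1..N. of_int (n i) * u i - of_int (nt i) * ut i)
     - (\<Sum>i=1..N. v * u i + vt * ut i)
     + \<i> / \<beta> * (\<Sum>i=1..N. \<Sum>j=1..N.
          (\<Sum>a\<in>{1,2}. F (u i - ut j + \<Delta> a)) + (\<Sum>b\<in>{3,4}. F (ut j - u i + \<Delta> b)))"

end

theory Submission imports Defs begin

text \<open>All holonomies of the configuration are purely imaginary, so every argument
  \<open>\<plusminus>(u\<^sub>i - \<tilde>u\<^sub>j) + \<Delta>\<^sub>I\<close> of \<open>F\<close> and \<open>F'\<close> has real part \<open>\<Delta>\<^sub>I > 0\<close>. There \<open>F\<close> and \<open>F'\<close> are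
  polynomials, and the constraint \<open>\<Sum>\<Delta>\<^sub>I = 2\<pi>\<close> makes \<open>E\<^sub>i\<^sub>j\<close> affine and the summand of the
  Bethe potential quadratic in \<open>u\<^sub>i - \<tilde>u\<^sub>j\<close>. Since \<open>\<Sum>u\<^sub>i = \<Sum>\<tilde>u\<^sub>j = 0\<close>, the linear terms drop out
  of all sums; what remains of the Bethe equations cancels against \<open>v, \<tilde>v\<close>, and what remains of
  the potential besides \<open>iN\<^sup>2/\<beta> \<Sum>F(\<Delta>\<^sub>I)\<close> scales like \<open>u\<^sup>2/\<beta> \<sim> \<beta>\<close>.\<close>

definition F_right :: "complex \<Rightarrow> complex" where
  "F_right w = w^3/6 - of_real pi/2 * w^2 + of_real (pi^2/3) * w"

definition F'_right :: "complex \<Rightarrow> complex" where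
  "F'_right w = w^2/2 - of_real pi * w + of_real (pi^2/3)"

lemma F_eq_F_right: "0 < Re w \<Longrightarrow> F w = F_right w"
  by (simp add: F_def F_right_def)

lemma F'_eq_F'_right: "0 < Re w \<Longrightarrow> F' w = F'_right w"
  by (simp add: F'_def F'_right_def)

lemma F'_right_shift_sum:
  assumes "d1 + d2 + d3 + d4 = 2 * of_real pi"
  shows "F'_right (x + d1) + F'_right (x + d2) - F'_right (- x + d3) - F'_right (- x + d4)
           = d3 * d4 - d1 * d2 - 2 * of_real pi * x"
proof -
  have d4: "d4 = 2 * of_real pi - d1 - d2 - d3" using assms by (simp add: algebra_simps)
  show ?thesis unfolding F'_right_def d4 by (simp add: field_simps power2_eq_square)
qed

lemma F_right_shift_sum:
  assumes "d1 + d2 + d3 + d4 = 2 * of_real pi"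
  shows "F_right (x + d1) + F_right (x + d2) + F_right (- x + d3) + F_right (- x + d4)
           = F_right d1 + F_right d2 + F_right d3 + F_right d4
             + (d3 * d4 - d1 * d2) * x - of_real pi * x^2"
proof -
  have d4: "d4 = 2 * of_real pi - d1 - d2 - d3" using assms by (simp add: algebra_simps)
  show ?thesis unfolding F_right_def d4 by (simp add: field_simps power2_eq_square power3_eq_cube)
qed

lemma F_right_sum_eq_elementary_symmetric:
  assumes "d1 + d2 + d3 + d4 = 2 * of_real pi"
  shows "F_right d1 + F_right d2 + F_right d3 + F_right d4
           = (d1 * d2 * d3 + d1 * d2 * d4 + d1 * d3 * d4 + d2 * d3 * d4) / 2"
proof -
  have d4: "d4 = 2 * of_real pi - d1 - d2 - d3" using assms by (simp add: algebra_simps)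
  show ?thesis unfolding F_right_def d4 by (simp add: field_simps power2_eq_square power3_eq_cube)
qed

lemma sum_1_to_4: "(\<Sum>I=1..4::nat. f I) = f 1 + f 2 + f 3 + f 4"
proof -
  have "{1..4::nat} = {1, 2, 3, 4}" by auto
  then show ?thesis by (simp add: add.assoc)
qed

locale chemical_potentials =
  fixes \<Delta> :: "nat \<Rightarrow> real"
  assumes Delta_pos: "\<And>I. I \<in> {1..4} \<Longrightarrow> 0 < \<Delta> I"
    and Delta_sum: "(\<Sum>I=1..4. \<Delta> I) = 2 * pi"
begin

lemma Delta_sum_complex:
  "of_real (\<Delta> 1) + of_real (\<Delta> 2) + of_real (\<Delta> 3) + of_real (\<Delta> 4) = 2 * (of_real pi :: complex)"
proof -
  have "\<Delta> 1 + \<Delta> 2 + \<Delta> 3 + \<Delta> 4 = 2 * pi" using Delta_sum unfolding sum_1_to_4 .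
  then show ?thesis by (metis of_real_add of_real_mult of_real_numeral)
qed

lemma Re_shift_pos:
  assumes "Re x = 0" "I \<in> {1..4}"
  shows "0 < Re (x + of_real (\<Delta> I))" "0 < Re (- x + of_real (\<Delta> I))"
  using assms Delta_pos by auto

lemma E_eq_affine:
  assumes "Re (u i - ut j) = 0"
  shows "E \<Delta> u ut i j = of_real (Cc \<Delta>) - 2 * of_real pi * (u i - ut j)"
proof -
  define x where "x = u i - ut j"
  have "Re x = 0" using assms by (simp add: x_def)
  note pos = Re_shift_pos[OF this]
  have "E \<Delta> u ut i j = F' (x + \<Delta> 1) + F' (x + \<Delta> 2) - F' (- x + \<Delta> 3) - F' (- x + \<Delta> 4)"
    by (simp add: E_def x_def)
  also have "\<dots> = F'_right (x + \<Delta> 1) + F'_right (x + \<Delta> 2)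
                  - F'_right (- x + \<Delta> 3) - F'_right (- x + \<Delta> 4)"
    using pos by (simp add: F'_eq_F'_right)
  also have "\<dots> = of_real (Cc \<Delta>) - 2 * of_real pi * x"
    unfolding F'_right_shift_sum[OF Delta_sum_complex] by (simp add: Cc_def)
  finally show ?thesis by (simp add: x_def)
qed

lemma F_summand_eq_quadratic:
  assumes "Re (u i - ut j) = 0"
  shows "(\<Sum>a\<in>{1,2}. F (u i - ut j + \<Delta> a)) + (\<Sum>b\<in>{3,4}. F (ut j - u i + \<Delta> b))
           = (\<Sum>I=1..4. F (\<Delta> I)) + of_real (Cc \<Delta>) * (u i - ut j) - of_real pi * (u i - ut j)^2"
proof -
  define x where "x = u i - ut j"
  have "Re x = 0" using assms by (simp add: x_def)
  note pos = Re_shift_pos[OF this] Delta_pos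
  have "(\<Sum>a\<in>{1,2}. F (u i - ut j + \<Delta> a)) + (\<Sum>b\<in>{3,4}. F (ut j - u i + \<Delta> b))
          = F_right (x + \<Delta> 1) + F_right (x + \<Delta> 2) + F_right (- x + \<Delta> 3) + F_right (- x + \<Delta> 4)"
    using pos by (simp add: x_def F_eq_F_right add.assoc)
  also have "\<dots> = (\<Sum>I=1..4. F (\<Delta> I)) + of_real (Cc \<Delta>) * x - of_real pi * x^2"
    unfolding F_right_shift_sum[OF Delta_sum_complex] sum_1_to_4 using pos
    by (simp add: F_eq_F_right Cc_def)
  finally show ?thesis by (simp add: x_def)
qed

lemma sum_F_Delta_eq_elementary_symmetric:
  "(\<Sum>I=1..4. F (\<Delta> I)) = (\<Sum>(a,b,c)\<in>{(a,b,c). 1 \<le> a \<and> a < b \<and> b < c \<and> c \<le> (4::nat)}.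
      complex_of_real (\<Delta> a * \<Delta> b * \<Delta> c)) / 2"
proof -
  have triples: "{(a,b,c). 1 \<le> a \<and> a < b \<and> b < c \<and> c \<le> (4::nat)} = {(1,2,3), (1,2,4), (1,3,4), (2,3,4)}"
    by auto
  have "(\<Sum>I=1..4. F (\<Delta> I)) = F_right (\<Delta> 1) + F_right (\<Delta> 2) + F_right (\<Delta> 3) + F_right (\<Delta> 4)"
    unfolding sum_1_to_4 using Delta_pos by (simp add: F_eq_F_right)
  also have "\<dots> = (of_real (\<Delta> 1) * of_real (\<Delta> 2) * of_real (\<Delta> 3) + of_real (\<Delta> 1) * of_real (\<Delta> 2) * of_real (\<Delta> 4)
      + of_real (\<Delta> 1) * of_real (\<Delta> 3) * of_real (\<Delta> 4) + of_real (\<Delta> 2) * of_real (\<Delta> 3) * of_real (\<Delta> 4)) / 2"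
    by (rule F_right_sum_eq_elementary_symmetric[OF Delta_sum_complex])
  also have "\<dots> = (\<Sum>(a,b,c)\<in>{(a,b,c). 1 \<le> a \<and> a < b \<and> b < c \<and> c \<le> (4::nat)}.
      complex_of_real (\<Delta> a * \<Delta> b * \<Delta> c)) / 2"
    unfolding triples by (simp add: add.assoc)
  finally show ?thesis .
qed

lemma sum_E_row:
  assumes "(\<Sum>k=1..N. ut k) = 0" and "\<And>k. Re (u i - ut k) = 0"
  shows "(\<Sum>k=1..N. E \<Delta> u ut i k) = of_nat N * of_real (Cc \<Delta>) - 2 * of_real pi * (of_nat N * u i)"
proof -
  have "(\<Sum>k=1..N. E \<Delta> u ut i k) = (\<Sum>k=1..N. of_real (Cc \<Delta>) - 2 * of_real pi * (u i - ut k))"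
    using assms(2) by (simp add: E_eq_affine)
  also have "\<dots> = of_nat N * of_real (Cc \<Delta>) - 2 * of_real pi * (of_nat N * u i - (\<Sum>k=1..N. ut k))"
    by (simp only: sum_subtractf sum_distrib_left[symmetric] sum_constant card_atLeastAtMost) simp
  finally show ?thesis using assms(1) by simp
qed

lemma sum_E_column:
  assumes "(\<Sum>k=1..N. u k) = 0" and "\<And>k. Re (u k - ut j) = 0"
  shows "(\<Sum>k=1..N. E \<Delta> u ut k j) = of_nat N * of_real (Cc \<Delta>) + 2 * of_real pi * (of_nat N * ut j)"
proof -
  have "(\<Sum>k=1..N. E \<Delta> u ut k j) = (\<Sum>k=1..N. of_real (Cc \<Delta>) - 2 * of_real pi * (u k - ut j))"
    using assms(2) by (simp add: E_eq_affine)
  also have "\<dots> = of_nat N * of_real (Cc \<Delta>) - 2 * of_real pi * ((\<Sum>k=1..N. u k) - of_nat N * ut j)"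
    by (simp only: sum_subtractf sum_distrib_left[symmetric] sum_constant card_atLeastAtMost) simp
  finally show ?thesis using assms(1) by simp
qed

lemma Bethe_V_eq:
  assumes "(\<Sum>i=1..N. u i) = 0" "(\<Sum>i=1..N. ut i) = 0" and "\<And>i j. Re (u i - ut j) = 0"
  shows "Bethe_V N \<beta> \<Delta> n nt u ut v vt
           = \<i> * of_nat (N^2) / \<beta> * (\<Sum>I=1..4. F (\<Delta> I))
             + 2 * of_real pi * (\<Sum>i=1..N. of_int (n i) * u i - of_int (nt i) * ut i)
             - \<i> * of_real pi / \<beta> * (\<Sum>i=1..N. \<Sum>j=1..N. (u i - ut j)^2)"
proof -
  define S where "S = (\<Sum>I=1..4. F (\<Delta> I))"
  define Q where "Q = (\<Sum>i=1..N. \<Sum>j=1..N. (u i - ut j)^2)"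
  have linear: "(\<Sum>i=1..N. \<Sum>j=1..N. u i - ut j) = 0"
    using assms(1,2) by (simp add: sum_subtractf sum_distrib_left[symmetric])
  have "(\<Sum>i=1..N. \<Sum>j=1..N. (\<Sum>a\<in>{1,2}. F (u i - ut j + \<Delta> a)) + (\<Sum>b\<in>{3,4}. F (ut j - u i + \<Delta> b)))
      = (\<Sum>i=1..N. \<Sum>j=1..N. S + of_real (Cc \<Delta>) * (u i - ut j) - of_real pi * (u i - ut j)^2)"
    unfolding S_def by (intro sum.cong refl F_summand_eq_quadratic assms(3))
  also have "\<dots> = of_nat N * (of_nat N * S) + of_real (Cc \<Delta>) * (\<Sum>i=1..N. \<Sum>j=1..N. u i - ut j)
      - of_real pi * Q"
    unfolding Q_def by (simp only: sum_subtractf sum.distrib sum_distrib_left[symmetric] sum_constant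
        card_atLeastAtMost diff_Suc_1)
  finally have quadratic: "(\<Sum>i=1..N. \<Sum>j=1..N. (\<Sum>a\<in>{1,2}. F (u i - ut j + \<Delta> a))
      + (\<Sum>b\<in>{3,4}. F (ut j - u i + \<Delta> b))) = of_nat (N^2) * S - of_real pi * Q"
    unfolding linear by (simp add: power2_eq_square)
  have multipliers: "(\<Sum>i=1..N. v * u i + vt * ut i) = 0"
    using assms(1,2) by (simp add: sum.distrib sum_distrib_left[symmetric])
  show ?thesis
    unfolding Bethe_V_def quadratic multipliers S_def[symmetric] Q_def[symmetric]
    by (simp add: right_diff_distrib mult.assoc)
qed

end

lemma sum_deviation_from_avg: "0 < N \<Longrightarrow> (\<Sum>j=1..N. real_of_int (n j) - avg N n) = 0"
  by (simp add: sum_subtractf avg_def)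

lemma sum_u_sol: "0 < N \<Longrightarrow> (\<Sum>i=1..N. u_sol N \<beta> n i) = 0"
  unfolding u_sol_def sum_distrib_left[symmetric] of_real_sum[symmetric]
  by (simp only: sum_deviation_from_avg of_real_0 mult_zero_right)

lemma sum_ut_sol: "0 < N \<Longrightarrow> (\<Sum>i=1..N. ut_sol N \<beta> n i) = 0"
  unfolding ut_sol_def sum_distrib_left[symmetric] of_real_sum[symmetric]
  by (simp only: sum_deviation_from_avg of_real_0 mult_zero_right)

lemma Re_u_sol_minus_ut_sol: "Re (u_sol N \<beta> n i - ut_sol N \<beta> nt j) = 0"
  by (simp add: u_sol_def ut_sol_def)

lemma u_sol_scale: "u_sol N \<beta> n j = of_real \<beta> * u_sol N 1 n j"
  by (simp add: u_sol_def)

lemma ut_sol_scale: "ut_sol N \<beta> n j = of_real \<beta> * ut_sol N 1 n j"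
  by (simp add: ut_sol_def)

lemma (in chemical_potentials) Bethe_equation_u_sol:
  assumes "0 < N" and "\<beta> \<noteq> 0"
  shows "0 = - 2 * pi * \<i> * of_int (n i) + \<i> * v_sol N \<beta> \<Delta> n
             + 1 / complex_of_real \<beta> * (\<Sum>k=1..N. E \<Delta> (u_sol N \<beta> n) (ut_sol N \<beta> nt) i k)"
proof -
  have scaled: "of_nat N * u_sol N \<beta> n i = - (\<i> * of_real \<beta>) * (of_int (n i) - of_real (avg N n))"
    using assms(1) by (simp add: u_sol_def)
  show ?thesis
    unfolding sum_E_row[where u="u_sol N \<beta> n" and ut="ut_sol N \<beta> nt",
        OF sum_ut_sol[OF assms(1)] Re_u_sol_minus_ut_sol] scaled
    using assms by (simp add: v_sol_def field_simps)
qed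

lemma (in chemical_potentials) Bethe_equation_ut_sol:
  assumes "0 < N" and "\<beta> \<noteq> 0"
  shows "0 = - 2 * pi * \<i> * of_int (nt j) - \<i> * vt_sol N \<beta> \<Delta> nt
             + 1 / complex_of_real \<beta> * (\<Sum>k=1..N. E \<Delta> (u_sol N \<beta> n) (ut_sol N \<beta> nt) k j)"
proof -
  have scaled: "of_nat N * ut_sol N \<beta> nt j = \<i> * of_real \<beta> * (of_int (nt j) - of_real (avg N nt))"
    using assms(1) by (simp add: ut_sol_def)
  show ?thesis
    unfolding sum_E_column[where u="u_sol N \<beta> n" and ut="ut_sol N \<beta> nt",
        OF sum_u_sol[OF assms(1)] Re_u_sol_minus_ut_sol] scaled
    using assms by (simp add: vt_sol_def field_simps)
qed

lemma (in chemical_potentials) Bethe_V_sol_remainder: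
  assumes "0 < N" and "\<beta> \<noteq> 0"
  shows "Bethe_V N \<beta> \<Delta> n nt (u_sol N \<beta> n) (ut_sol N \<beta> nt) (v_sol N \<beta> \<Delta> n) (vt_sol N \<beta> \<Delta> nt)
           - \<i> * of_nat (N^2) / complex_of_real \<beta> * (\<Sum>I=1..4. F (\<Delta> I))
         = of_real \<beta> * (2 * of_real pi * (\<Sum>i=1..N. of_int (n i) * u_sol N 1 n i - of_int (nt i) * ut_sol N 1 nt i)
             - \<i> * of_real pi * (\<Sum>i=1..N. \<Sum>j=1..N. (u_sol N 1 n i - ut_sol N 1 nt j)^2))"
proof -
  have linear: "(\<Sum>i=1..N. of_int (n i) * u_sol N \<beta> n i - of_int (nt i) * ut_sol N \<beta> nt i)
      = of_real \<beta> * (\<Sum>i=1..N. of_int (n i) * u_sol N 1 n i - of_int (nt i) * ut_sol N 1 nt i)"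
    unfolding u_sol_scale[of N \<beta>] ut_sol_scale[of N \<beta>] by (simp add: sum_distrib_left algebra_simps)
  have quadratic: "(\<Sum>i=1..N. \<Sum>j=1..N. (u_sol N \<beta> n i - ut_sol N \<beta> nt j)^2)
      = of_real \<beta>^2 * (\<Sum>i=1..N. \<Sum>j=1..N. (u_sol N 1 n i - ut_sol N 1 nt j)^2)"
    unfolding u_sol_scale[of N \<beta>] ut_sol_scale[of N \<beta>]
    by (simp add: sum_distrib_left power_mult_distrib flip: right_diff_distrib)
  show ?thesis
    unfolding Bethe_V_eq[OF sum_u_sol[OF assms(1)] sum_ut_sol[OF assms(1)] Re_u_sol_minus_ut_sol]
      linear quadratic
    using assms(2) by (simp add: field_simps power2_eq_square)
qed

lemma bigo_of_real_if_eventually_linear: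
  assumes "\<forall>\<^sub>F x in L. f x = complex_of_real x * c"
  shows "f \<in> O[L](\<lambda>x. complex_of_real x)"
proof -
  have "(\<lambda>x. complex_of_real x * c) \<in> O[L](\<lambda>x. complex_of_real x)"
    by (intro bigoI[where c="norm c"]) (simp add: norm_mult mult.commute)
  then show ?thesis using landau_o.big.in_cong[OF assms] by simp
qed

theorem mainTheorem7:
  fixes N :: nat and \<Delta> :: "nat \<Rightarrow> real" and n nt :: "nat \<Rightarrow> int"
  assumes "N \<ge> 2"
    and "\<forall>I\<in>{1..4}. 0 < \<Delta> I \<and> \<Delta> I < 2 * pi"
    and "(\<Sum>I=1..4. \<Delta> I) = 2 * pi"
  shows "(\<forall>\<beta>::real. \<beta> > 0 \<longrightarrow>
           ((\<Sum>i=1..N. u_sol N \<beta> n i) = 0 \<and> (\<Sum>i=1..N. ut_sol N \<beta> nt i) = 0 \<and>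
           (\<forall>i\<in>{1..N}. \<forall>j\<in>{1..N}.
              0 = - 2 * pi * \<i> * of_int (n i) + \<i> * v_sol N \<beta> \<Delta> n
                  + 1 / complex_of_real \<beta> * (\<Sum>k=1..N. E \<Delta> (u_sol N \<beta> n) (ut_sol N \<beta> nt) i k) \<and>
              0 = - 2 * pi * \<i> * of_int (nt j) - \<i> * vt_sol N \<beta> \<Delta> nt
                  + 1 / complex_of_real \<beta> * (\<Sum>k=1..N. E \<Delta> (u_sol N \<beta> n) (ut_sol N \<beta> nt) k j))))
    \<and> ((\<lambda>\<beta>::real. Bethe_V N \<beta> \<Delta> n nt (u_sol N \<beta> n) (ut_sol N \<beta> nt) (v_sol N \<beta> \<Delta> n) (vt_sol N \<beta> \<Delta> nt)
               - \<i> * of_nat (N^2) / complex_of_real \<beta> * (\<Sum>I=1..4. F (\<Delta> I)))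
         \<in> O[at_right 0](\<lambda>\<beta>. complex_of_real \<beta>))
    \<and> (\<forall>\<beta>::real. \<beta> > 0 \<longrightarrow> \<i> * of_nat (N^2) / complex_of_real \<beta> * (\<Sum>I=1..4. F (\<Delta> I))
           = \<i> * of_nat (N^2) / (2 * complex_of_real \<beta>) *
             (\<Sum>(a,b,c)\<in>{(a,b,c). 1 \<le> a \<and> a < b \<and> b < c \<and> c \<le> (4::nat)}.
                complex_of_real (\<Delta> a * \<Delta> b * \<Delta> c)))"
proof -
  interpret chemical_potentials \<Delta>
    using assms(2,3) by unfold_locales auto
  have N: "0 < N" using assms(1) by simp
  have remainder: "\<forall>\<^sub>F \<beta> in at_right 0.
      Bethe_V N \<beta> \<Delta> n nt (u_sol N \<beta> n) (ut_sol N \<beta> nt) (v_sol N \<beta> \<Delta> n) (vt_sol N \<beta> \<Delta> nt)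
        - \<i> * of_nat (N^2) / complex_of_real \<beta> * (\<Sum>I=1..4. F (\<Delta> I))
      = of_real \<beta> * (2 * of_real pi * (\<Sum>i=1..N. of_int (n i) * u_sol N 1 n i - of_int (nt i) * ut_sol N 1 nt i)
          - \<i> * of_real pi * (\<Sum>i=1..N. \<Sum>j=1..N. (u_sol N 1 n i - ut_sol N 1 nt j)^2))"
    using eventually_at_right_less[of "0::real"]
    by (rule eventually_mono) (rule Bethe_V_sol_remainder[OF N], simp)
  show ?thesis
    using sum_u_sol[OF N] sum_ut_sol[OF N] Bethe_equation_u_sol[OF N] Bethe_equation_ut_sol[OF N]
      bigo_of_real_if_eventually_linear[OF remainder]
    unfolding sum_F_Delta_eq_elementary_symmetric by simp
qed

end
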